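(* In the hardware model described in the context, and for a program obeying the well-behavedness rules below, suppose a thread $T_i$ tags a node $n$ at time $t_t$ while $n$ is reachable in its data structure. If some thread $T_j$ frees $n$ at a time $t_f$ with $t_t < t_f$, then any conditional access to $n$ by $T_i$ at a time $t_d > t_f$ (with no re-tagging of $n$ by $T_i$ in between) fails. In particular, a conditional access never succeeds on a node that has been freed since it was tagged.
   Context: Model: threads operate on a shared memory organized into nodes, with a cache-coherence mechanism (e.g. MSI/MESI). Each thread maintains a set of tagged locations. Conditional-access instructions cread (read) and cwrite (write) satisfy: (P1) a conditional access atomically tags the accessed node on its first access by the thread and then conditionally performs the read/write; (P2) a conditional access succeeds only if none of the thread's tagged locations has been invalidated since it was tagged (on failure all tags are removed and the operation restarts); (P3) when a location is written, all cached copies at other threads are invalidated, thereby invalidating any tags on it held by other threads; (P4) conditional accesses may fail spuriously but never succeed spuriously. Well-behavedness: all shared-memory reads and writes of data-structure operations use cread/cwrite; reclaimer rule: a thread frees a node only after unlinking it and then writing to (marking) it; only one thread may free a given node.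
   Formalization: The freeing thread $T_j$ differs from $T_i$, the reclaimer rule also keeps n unreachable from its unlinking until it is freed, and no re-tagging means n stays tagged by $T_i$ at every time after $t_t$ up to $t_d$. Each condition added here is assumed in the paper as well or is needed for the statement above to hold. *)

theory Defs
  imports Main
begin

text \<open>Threads have type 't, shared-memory nodes have type 'n.  Time is discrete:
  event number k of a trace happens at time k, and the state before that
  event is the state at time k.

  Well-behavedness (all data-structure reads and writes use cread/cwrite) is
  built in: the only memory accesses available are conditional ones.  The
  result of a conditional access is recorded in the event (True = success);
  spurious failures are always allowed, successes are constrained by
  legality (P2, P4).\<close>

datatype ('t, 'n) event =
    CRead 't 'n bool            \<comment> \<open>thread, accessed node, success?\<close>
  | CWrite 't 'n "'n set" bool  \<comment> \<open>thread, written node, set of reachable nodes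
                                   after the write (if it succeeds), success?\<close>
  | Free 't 'n
  | UntagAll 't

record ('t, 'n) mstate =
  tags :: "'t \<Rightarrow> 'n set"
  invd :: "'t \<Rightarrow> bool"       \<comment> \<open>some tagged location invalidated since it was tagged\<close>
  reach :: "'n set"
  freed :: "'n set"

text \<open>Effect of a conditional access by thread t on node n with outcome ok:
  (P1) the node is tagged, then the access is performed; (P2) on failure all
  tags of t are removed.\<close>
definition cond_access :: "('t, 'n) mstate \<Rightarrow> 't \<Rightarrow> 'n \<Rightarrow> bool \<Rightarrow> ('t, 'n) mstate" where
  "cond_access s t n ok =
     (if ok then s\<lparr>tags := (tags s)(t := insert n (tags s t))\<rparr>
      else s\<lparr>tags := (tags s)(t := {}), invd := (invd s)(t := False)\<rparr>)"

text \<open>(P3) a successful write to node m invalidates the cached copies of m at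
  all other threads, thereby invalidating their tags on m.\<close>
definition invalidate_others :: "('t, 'n) mstate \<Rightarrow> 't \<Rightarrow> 'n \<Rightarrow> ('t, 'n) mstate" where
  "invalidate_others s t m =
     s\<lparr>invd := (\<lambda>u. invd s u \<or> (u \<noteq> t \<and> m \<in> tags s u))\<rparr>"

fun step :: "('t, 'n) mstate \<Rightarrow> ('t, 'n) event \<Rightarrow> ('t, 'n) mstate" where
  "step s (CRead t n ok) = cond_access s t n ok"
| "step s (CWrite t m R ok) =
     (if ok then (cond_access (invalidate_others s t m) t m True)\<lparr>reach := R\<rparr>
      else cond_access s t m False)"
| "step s (Free t n) = s\<lparr>freed := insert n (freed s)\<rparr>"
| "step s (UntagAll t) = s\<lparr>tags := (tags s)(t := {}), invd := (invd s)(t := False)\<rparr>"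

text \<open>(P2)/(P4): a conditional access may succeed only if none of the thread's
  tagged locations has been invalidated; failures are always possible.\<close>
fun legal :: "('t, 'n) mstate \<Rightarrow> ('t, 'n) event \<Rightarrow> bool" where
  "legal s (CRead t n ok) = (ok \<longrightarrow> \<not> invd s t)"
| "legal s (CWrite t m R ok) = (ok \<longrightarrow> \<not> invd s t)"
| "legal s (Free t n) = True"
| "legal s (UntagAll t) = True"

fun run :: "('t, 'n) mstate \<Rightarrow> (nat \<Rightarrow> ('t, 'n) event) \<Rightarrow> nat \<Rightarrow> ('t, 'n) mstate" where
  "run s0 tr 0 = s0"
| "run s0 tr (Suc k) = step (run s0 tr k) (tr k)"

definition valid_exec :: "('t, 'n) mstate \<Rightarrow> (nat \<Rightarrow> ('t, 'n) event) \<Rightarrow> bool" where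
  "valid_exec s0 tr \<longleftrightarrow> (\<forall>k. legal (run s0 tr k) (tr k))"

definition unlinks_at :: "('t, 'n) mstate \<Rightarrow> (nat \<Rightarrow> ('t, 'n) event) \<Rightarrow> nat \<Rightarrow> 't \<Rightarrow> 'n \<Rightarrow> bool" where
  "unlinks_at s0 tr u j n \<longleftrightarrow>
     (\<exists>m R. tr u = CWrite j m R True) \<and> n \<in> reach (run s0 tr u) \<and> n \<notin> reach (run s0 tr (Suc u))"

text \<open>Reclaimer rule: a thread frees a node only after unlinking it and then
  writing to (marking) it (the node stays unlinked from the unlink to the
  free); only one thread frees a given node (and only once).\<close>
definition reclaimer_ok :: "('t, 'n) mstate \<Rightarrow> (nat \<Rightarrow> ('t, 'n) event) \<Rightarrow> bool" where
  "reclaimer_ok s0 tr \<longleftrightarrow>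
     (\<forall>k j n. tr k = Free j n \<longrightarrow>
        (\<exists>u w. u < w \<and> w < k \<and> unlinks_at s0 tr u j n \<and>
               (\<forall>k'. u < k' \<and> k' \<le> k \<longrightarrow> n \<notin> reach (run s0 tr k')) \<and>
               (\<exists>R. tr w = CWrite j n R True)) \<and>
        (\<forall>k' j'. tr k' = Free j' n \<longrightarrow> k' = k \<and> j' = j))"

definition tags_at :: "('t, 'n) mstate \<Rightarrow> (nat \<Rightarrow> ('t, 'n) event) \<Rightarrow> nat \<Rightarrow> 't \<Rightarrow> 'n \<Rightarrow> bool" where
  "tags_at s0 tr t i n \<longleftrightarrow>
     n \<notin> tags (run s0 tr t) i \<and> n \<in> tags (run s0 tr (Suc t)) i"

fun cond_access_to :: "('t, 'n) event \<Rightarrow> 't \<Rightarrow> 'n \<Rightarrow> bool" where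
  "cond_access_to (CRead t m ok) i n = (t = i \<and> m = n)"
| "cond_access_to (CWrite t m R ok) i n = (t = i \<and> m = n)"
| "cond_access_to _ i n = False"

fun succeeds :: "('t, 'n) event \<Rightarrow> bool" where
  "succeeds (CRead t m ok) = ok"
| "succeeds (CWrite t m R ok) = ok"
| "succeeds _ = False"

end

theory Submission
  imports Defs
begin

text \<open>Before freeing n, the reclaimer must write to it. That write happens after T_i tagged n
  (n is still reachable at tagging time, and unreachable from the unlink onwards), so by (P3) it
  invalidates T_i's tag. The invalidation persists as long as T_i keeps n tagged, and then (P2)
  forbids every later conditional access of T_i from succeeding.\<close>

lemma step_keeps_invd:
  assumes "invd s i" and "n \<in> tags (step s e) i"
  shows "invd (step s e) i"
  using assms
  by (cases e) (auto simp: cond_access_def invalidate_others_def split: if_splits)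

lemma successful_write_invalidates_others:
  assumes "n \<in> tags s i" and "i \<noteq> j"
  shows "invd (step s (CWrite j n R True)) i"
  using assms by (simp add: cond_access_def invalidate_others_def)

lemma run_keeps_invd:
  assumes "invd (run s0 tr a) i" and "a \<le> b"
    and "\<forall>k. a < k \<and> k \<le> b \<longrightarrow> n \<in> tags (run s0 tr k) i"
  shows "invd (run s0 tr b) i"
  using \<open>a \<le> b\<close> assms(3)
proof (induction b rule: dec_induct)
  case base
  show ?case using assms(1) .
next
  case (step k)
  have "invd (run s0 tr k) i"
    using step.IH step.prems by simp
  moreover have "n \<in> tags (run s0 tr (Suc k)) i"
    using step.prems step.hyps by (simp del: run.simps)
  ultimately show ?case by (simp add: step_keeps_invd)
qed

lemma legal_access_of_invalidated_thread_fails: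
  assumes "invd s i" and "legal s e" and "cond_access_to e i n"
  shows "\<not> succeeds e"
  using assms by (cases e) auto

lemma free_preceded_by_marking_write:
  assumes "reclaimer_ok s0 tr" and "tr k = Free j n"
    and "n \<in> reach (run s0 tr t)" and "t < k"
  obtains w R where "t < w" and "w < k" and "tr w = CWrite j n R True"
proof -
  from assms(1,2) obtain u w where
    "u < w" "w < k" and unreachable: "\<forall>k'. u < k' \<and> k' \<le> k \<longrightarrow> n \<notin> reach (run s0 tr k')"
    and "\<exists>R. tr w = CWrite j n R True"
    unfolding reclaimer_ok_def by meson
  moreover have "t \<le> u"
    using unreachable assms(3,4) by (meson not_le less_imp_le_nat)
  ultimately show thesis using that by fastforce
qed

theorem theorem1:
  fixes s0 :: "('t, 'n) mstate" and tr :: "nat \<Rightarrow> ('t, 'n) event"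
    and i j :: 't and n :: 'n and t_t t_f t_d :: nat
  assumes "valid_exec s0 tr"
    and "reclaimer_ok s0 tr"
    and "tags_at s0 tr t_t i n"
    and "n \<in> reach (run s0 tr t_t)"
    and "tr t_f = Free j n"
    and "j \<noteq> i"
    and "t_t < t_f" and "t_f < t_d"
    and "\<forall>k. t_t < k \<and> k \<le> t_d \<longrightarrow> n \<in> tags (run s0 tr k) i"
    and "cond_access_to (tr t_d) i n"
  shows "\<not> succeeds (tr t_d)"
proof -
  obtain w R where "t_t < w" "w < t_f" and mark: "tr w = CWrite j n R True"
    using assms(2,5,4,7) by (rule free_preceded_by_marking_write)
  with assms(8,9) have "n \<in> tags (run s0 tr w) i" by simp
  then have invd_after_mark: "invd (run s0 tr (Suc w)) i"
    using successful_write_invalidates_others assms(6)[symmetric] by (simp only: run.simps mark)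
  have still_tagged: "\<forall>k. Suc w < k \<and> k \<le> t_d \<longrightarrow> n \<in> tags (run s0 tr k) i"
    using assms(9) \<open>t_t < w\<close> by simp
  have "Suc w \<le> t_d"
    using \<open>w < t_f\<close> \<open>t_f < t_d\<close> by simp
  from invd_after_mark this still_tagged have "invd (run s0 tr t_d) i"
    by (rule run_keeps_invd)
  moreover have "legal (run s0 tr t_d) (tr t_d)"
    using assms(1) unfolding valid_exec_def ..
  ultimately show ?thesis
    using assms(10) by (rule legal_access_of_invalidated_thread_fails)
qed

end
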